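(* Let $D$ be a finite set, $k\ge2$, and let $P:D^k\to\{0,1\}$ be a $k$-ary predicate which contains a singleton $\ell$-cube for some $2\le\ell\le k$. Then there exist a weighted directed $k$-uniform hypergraph $H=(V,E,w)$ with $|V|=n$ such that for every $0<\varepsilon<1$ and every $\varepsilon$-$P$-sparsifier $H_\varepsilon=(V,E_\varepsilon,w_\varepsilon)$ of $H$ we have $|E_\varepsilon|=\Omega(n^\ell)$; that is, there is a constant $c>0$ such that for infinitely many $n$ there is such an $H$ on $n$ vertices with $|E_\varepsilon|\ge cn^\ell$ for all such $\varepsilon$ and $H_\varepsilon$.
   Context: $P$ contains a singleton $\ell$-cube if there exist two-element subsets $D_j=\{d^j_0,d^j_1\}\subseteq D$ for $j=1,\dots,\ell$, indices $n_1,\dots,n_\ell\in\{0,1\}$ and a permutation $\sigma$ of the $k$ coordinates such that (i) there exist $x_{\ell+1},\dots,x_k\in D$ with $P(\sigma(d^1_{n_1},\dots,d^\ell_{n_\ell},x_{\ell+1},\dots,x_k))=1$, and (ii) for all $y_{\ell+1},\dots,y_k\in D$ and all $i_1,\dots,i_\ell\in\{0,1\}$, $P(\sigma(d^1_{i_1},\dots,d^\ell_{i_\ell},y_{\ell+1},\dots,y_k))=1$ implies $i_j=n_j$ for all $j=1,\dots,\ell$. Here $\sigma(\cdot)$ permutes the entries of the tuple. A weighted directed $k$-uniform hypergraph $H=(V,E,w)$ has $E$ a set of ordered $k$-tuples of distinct vertices and $w:E\to\mathbb{R}_{>0}$. For $A:V\to D$, $\mathrm{Val}_{H,P}(A)=\sum_{e\in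 E}w(e)P(A(e))$ with $A$ applied entrywise. An $\varepsilon$-$P$-sparsifier of $H$ is $H_\varepsilon=(V,E_\varepsilon,w_\varepsilon)$ with $E_\varepsilon\subseteq E$, $w_\varepsilon:E_\varepsilon\to\mathbb{R}_{>0}$, such that for every $A:V\to D$, $(1-\varepsilon)\mathrm{Val}_{H,P}(A)\le\mathrm{Val}_{H_\varepsilon,P}(A)\le(1+\varepsilon)\mathrm{Val}_{H,P}(A)$. *)

theory Defs
  imports "HOL-Analysis.Analysis" "HOL-Combinatorics.Permutations"
begin

text \<open>Tuples in D^k are lists of length k with entries in D; a k-ary predicate is
  P :: 'd list => bool (true = 1, false = 0).\<close>

definition permute_tuple :: "(nat \<Rightarrow> nat) \<Rightarrow> 'a list \<Rightarrow> 'a list" where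
  "permute_tuple \<sigma> xs = map (\<lambda>i. xs ! \<sigma> i) [0..<length xs]"

text \<open>The two-element sets are D_j = {d j False, d j True} (j < l), indices n_j are
  booleans n j.\<close>

definition contains_singleton_cube ::
    "'d set \<Rightarrow> nat \<Rightarrow> ('d list \<Rightarrow> bool) \<Rightarrow> nat \<Rightarrow> bool" where
  "contains_singleton_cube D k P l \<longleftrightarrow>
     (\<exists>(d :: nat \<Rightarrow> bool \<Rightarrow> 'd) (nn :: nat \<Rightarrow> bool) \<sigma>.
        (\<forall>j<l. d j False \<in> D \<and> d j True \<in> D \<and> d j False \<noteq> d j True) \<and>
        \<sigma> permutes {..<k} \<and>
        (\<exists>xs. length xs = k - l \<and> set xs \<subseteq> D \<and>
           P (permute_tuple \<sigma> (map (\<lambda>j. d j (nn j)) [0..<l] @ xs))) \<and>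
        (\<forall>ys (ii :: nat \<Rightarrow> bool). length ys = k - l \<and> set ys \<subseteq> D \<and>
           P (permute_tuple \<sigma> (map (\<lambda>j. d j (ii j)) [0..<l] @ ys))
           \<longrightarrow> (\<forall>j<l. ii j = nn j)))"

definition wdhypergraph :: "nat \<Rightarrow> 'v set \<Rightarrow> 'v list set \<Rightarrow> ('v list \<Rightarrow> real) \<Rightarrow> bool" where
  "wdhypergraph k V E w \<longleftrightarrow> finite V \<and>
     (\<forall>e\<in>E. length e = k \<and> distinct e \<and> set e \<subseteq> V) \<and> (\<forall>e\<in>E. w e > 0)"

definition Val :: "'v list set \<Rightarrow> ('v list \<Rightarrow> real) \<Rightarrow> ('d list \<Rightarrow> bool) \<Rightarrow> ('v \<Rightarrow> 'd) \<Rightarrow> real" where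
  "Val E w P A = (\<Sum>e\<in>E. w e * of_bool (P (map A e)))"

definition is_sparsifier ::
    "'d set \<Rightarrow> ('d list \<Rightarrow> bool) \<Rightarrow> real \<Rightarrow> 'v set \<Rightarrow> 'v list set \<Rightarrow> ('v list \<Rightarrow> real)
      \<Rightarrow> 'v list set \<Rightarrow> ('v list \<Rightarrow> real) \<Rightarrow> bool" where
  "is_sparsifier D P \<epsilon> V E w E' w' \<longleftrightarrow> E' \<subseteq> E \<and> (\<forall>e\<in>E'. w' e > 0) \<and>
     (\<forall>A. A ` V \<subseteq> D \<longrightarrow>
        (1 - \<epsilon>) * Val E w P A \<le> Val E' w' P A \<and> Val E' w' P A \<le> (1 + \<epsilon>) * Val E w P A)"

end

theory Submission
  imports Defs
begin

text \<open>Take l blocks of m vertices, one block per cube coordinate, plus k - l further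
  vertices, and put a unit-weight edge on every choice of one vertex per block, completed
  by the further vertices and arranged by \<sigma>; this gives m ^ l edges on n = l m + k - l
  vertices.  Given an edge, assign to its vertex in block j the value d j (n j) of the
  satisfying corner of the cube, to the other vertices of block j the other element of D j,
  and the witness entries x to the further vertices.  By uniqueness of the corner exactly
  the given edge is satisfied, so this assignment has positive value on the hypergraph and
  value 0 on any subgraph missing that edge.  Hence every sparsifier with \<epsilon> < 1 keeps all
  m ^ l \<ge> (n / k) ^ l edges.\<close>

lemma length_permute_tuple [simp]: "length (permute_tuple \<sigma> xs) = length xs"
  by (simp add: permute_tuple_def)

lemma nth_permute_tuple: "i < length xs \<Longrightarrow> permute_tuple \<sigma> xs ! i = xs ! \<sigma> i"
  by (simp add: permute_tuple_def)

lemma map_permute_tuple: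
  assumes "\<sigma> permutes {..<length xs}"
  shows "map f (permute_tuple \<sigma> xs) = permute_tuple \<sigma> (map f xs)"
proof (rule nth_equalityI)
  fix i assume "i < length (map f (permute_tuple \<sigma> xs))"
  moreover have "\<sigma> i < length xs \<longleftrightarrow> i < length xs"
    using permutes_in_image[OF assms] by simp
  ultimately show "map f (permute_tuple \<sigma> xs) ! i = permute_tuple \<sigma> (map f xs) ! i"
    by (simp add: nth_permute_tuple)
qed simp

lemma set_permute_tuple:
  assumes "\<sigma> permutes {..<length xs}"
  shows "set (permute_tuple \<sigma> xs) = set xs"
proof -
  have "set (permute_tuple \<sigma> xs) = (!) xs ` \<sigma> ` {..<length xs}"
    by (auto simp: permute_tuple_def)
  also have "\<dots> = set xs"
    using permutes_image[OF assms] by (auto simp: in_set_conv_nth)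
  finally show ?thesis .
qed

lemma distinct_permute_tuple:
  assumes "\<sigma> permutes {..<length xs}" and "distinct xs"
  shows "distinct (permute_tuple \<sigma> xs)"
  using assms by (simp add: card_distinct distinct_card set_permute_tuple)

lemma permute_tuple_inject:
  assumes "\<sigma> permutes {..<length xs}" and "length ys = length xs"
    and "permute_tuple \<sigma> xs = permute_tuple \<sigma> ys"
  shows "xs = ys"
proof (rule nth_equalityI)
  fix i assume "i < length xs"
  then have "inv \<sigma> i < length xs" and "\<sigma> (inv \<sigma> i) = i"
    using permutes_in_image[OF permutes_inv[OF assms(1)]] permutes_inverses(1)[OF assms(1)]
    by auto
  then show "xs ! i = ys ! i"
    using arg_cong[OF assms(3), of "\<lambda>zs. zs ! inv \<sigma> i"] assms(2)
    by (simp add: nth_permute_tuple)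
qed (use assms in simp)

text \<open>Vertex a * l + j (a < m) is the a-th vertex of block j; the further vertices are
  l * m, ..., l * m + k - l - 1.\<close>

definition block_tuple :: "nat \<Rightarrow> nat \<Rightarrow> nat \<Rightarrow> nat list \<Rightarrow> nat list" where
  "block_tuple k l m as = map (\<lambda>j. as ! j * l + j) [0..<l] @ map (\<lambda>i. l * m + i) [0..<k - l]"

definition cube_edges :: "(nat \<Rightarrow> nat) \<Rightarrow> nat \<Rightarrow> nat \<Rightarrow> nat \<Rightarrow> nat list set" where
  "cube_edges \<sigma> k l m =
     (\<lambda>as. permute_tuple \<sigma> (block_tuple k l m as)) ` {as. set as \<subseteq> {..<m} \<and> length as = l}"

lemma length_block_tuple [simp]: "l \<le> k \<Longrightarrow> length (block_tuple k l m as) = k"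
  by (simp add: block_tuple_def)

lemma block_vertex_less:
  assumes "set as \<subseteq> {..<m}" and "length as = l" and "j < l"
  shows "as ! j * l + j < l * m"
proof -
  have "as ! j < m" using assms nth_mem by fastforce
  have "as ! j * l + j < (as ! j + 1) * l" using assms(3) by simp
  also have "\<dots> \<le> m * l" using \<open>as ! j < m\<close> by (intro mult_right_mono) auto
  finally show ?thesis by (simp add: mult.commute)
qed

lemma nth_block_tuple: "j < l \<Longrightarrow> block_tuple k l m as ! j = as ! j * l + j"
  by (simp add: block_tuple_def nth_append)

lemma block_tuple_inject:
  assumes "length as = l" and "length bs = l" and "block_tuple k l m as = block_tuple k l m bs"
  shows "as = bs"
proof (rule nth_equalityI)
  fix j assume "j < length as"
  then have "as ! j * l + j = bs ! j * l + j"
    using assms by (metis nth_block_tuple)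
  then show "as ! j = bs ! j" using \<open>j < length as\<close> assms(1) by simp
qed (use assms in simp)

lemma set_block_part_subset:
  assumes "set as \<subseteq> {..<m}" and "length as = l"
  shows "set (map (\<lambda>j. as ! j * l + j) [0..<l]) \<subseteq> {..<l * m}"
  using block_vertex_less[OF assms] by auto

lemma distinct_block_tuple:
  assumes "set as \<subseteq> {..<m}" and "length as = l"
  shows "distinct (block_tuple k l m as)"
proof -
  have "inj_on (\<lambda>j. as ! j * l + j) {0..<l}"
    by (rule inj_onI) (metis atLeastLessThan_iff mod_less mod_mult_self3)
  then have "distinct (map (\<lambda>j. as ! j * l + j) [0..<l])"
    by (simp add: distinct_map)
  moreover have "set (map (\<lambda>j. as ! j * l + j) [0..<l]) \<inter> set (map (\<lambda>i. l * m + i) [0..<k - l]) = {}"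
  proof -
    have "l * m \<le> x" if "x \<in> set (map (\<lambda>i. l * m + i) [0..<k - l])" for x
      using that by auto
    then show ?thesis
      using set_block_part_subset[OF assms] by (meson disjoint_iff lessThan_iff not_le subsetD)
  qed
  moreover have "distinct (map (\<lambda>i. l * m + i) [0..<k - l])"
    by (simp add: distinct_map)
  ultimately show ?thesis
    unfolding block_tuple_def distinct_append by blast
qed

lemma set_block_tuple_subset:
  assumes "set as \<subseteq> {..<m}" and "length as = l"
  shows "set (block_tuple k l m as) \<subseteq> {..<l * m + (k - l)}"
  using set_block_part_subset[OF assms] by (fastforce simp: block_tuple_def)

lemma card_cube_edges:
  assumes "\<sigma> permutes {..<k}" and "l \<le> k"
  shows "card (cube_edges \<sigma> k l m) = m ^ l"
proof -
  let ?I = "{as. set as \<subseteq> {..<m} \<and> length as = l}"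
  have "inj_on (\<lambda>as. permute_tuple \<sigma> (block_tuple k l m as)) ?I"
  proof (rule inj_onI)
    fix as bs
    assume as: "as \<in> ?I" and bs: "bs \<in> ?I"
      and eq: "permute_tuple \<sigma> (block_tuple k l m as) = permute_tuple \<sigma> (block_tuple k l m bs)"
    have "\<sigma> permutes {..<length (block_tuple k l m as)}"
      by (simp only: length_block_tuple[OF assms(2)] assms(1))
    then have "block_tuple k l m as = block_tuple k l m bs"
      using permute_tuple_inject[OF _ _ eq] assms(2) by simp
    then show "as = bs"
      using block_tuple_inject[of as l bs] as bs by simp
  qed
  then have "card (cube_edges \<sigma> k l m) = card ?I"
    unfolding cube_edges_def by (rule card_image)
  also have "\<dots> = m ^ l"
    using card_lists_length_eq[of "{..<m}" l] by simp
  finally show ?thesis .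
qed

lemma wdhypergraph_cube_edges:
  assumes "\<sigma> permutes {..<k}" and "l \<le> k"
  shows "wdhypergraph k {..<l * m + (k - l)} (cube_edges \<sigma> k l m) (\<lambda>_. 1)"
  unfolding wdhypergraph_def
proof (intro conjI ballI)
  show "finite {..<l * m + (k - l)}" by simp
next
  fix e assume "e \<in> cube_edges \<sigma> k l m"
  then obtain as where as: "set as \<subseteq> {..<m}" "length as = l"
    and e: "e = permute_tuple \<sigma> (block_tuple k l m as)"
    by (auto simp: cube_edges_def)
  have \<sigma>: "\<sigma> permutes {..<length (block_tuple k l m as)}"
    by (simp only: length_block_tuple[OF assms(2)] assms(1))
  show "length e = k" using e assms(2) by simp
  show "distinct e"
    using e distinct_permute_tuple[OF \<sigma> distinct_block_tuple[OF as]] by simp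
  show "set e \<subseteq> {..<l * m + (k - l)}"
    using e set_permute_tuple[OF \<sigma>] set_block_tuple_subset[OF as] by simp
qed simp

lemma cube_vertex_count_bound:
  assumes "l \<le> k" and "1 \<le> m"
  shows "1 / real k ^ l * real (l * m + (k - l)) ^ l \<le> real m ^ l"
proof -
  have "l * m + (k - l) \<le> l * m + (k - l) * m" using assms(2) by simp
  also have "\<dots> = k * m" using assms(1) by (simp add: algebra_simps)
  finally have "real (l * m + (k - l)) \<le> real k * real m"
    by (metis of_nat_le_iff of_nat_mult)
  then have "real (l * m + (k - l)) / real k \<le> real m"
    by (cases "k = 0") (simp_all add: divide_le_eq mult.commute)
  then have "(real (l * m + (k - l)) / real k) ^ l \<le> real m ^ l"
    by (rule power_mono) simp
  then show ?thesis by (simp add: power_divide)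
qed

lemma infinite_if_contains_progression:
  fixes a b :: nat
  assumes "0 < a" and "\<And>m. 1 \<le> m \<Longrightarrow> a * m + b \<in> S"
  shows "infinite S"
proof
  assume "finite S"
  moreover have "(\<lambda>m. a * m + b) ` {1..} \<subseteq> S" using assms(2) by auto
  ultimately have "finite ((\<lambda>m. a * m + b) ` {1..})" by (rule finite_subset[rotated])
  moreover have "inj_on (\<lambda>m. a * m + b) {1..}" using assms(1) by (simp add: inj_on_def)
  ultimately show False using infinite_Ici[of 1] finite_imageD by blast
qed

lemma sparsifier_keeps_isolated_edge:
  assumes sparsifier: "is_sparsifier D P \<epsilon> V E w E' w'" and "\<epsilon> < 1"
    and "finite E" and "e\<^sub>0 \<in> E" and "w e\<^sub>0 > 0" and "A ` V \<subseteq> D"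
    and isolated: "\<And>e. e \<in> E \<Longrightarrow> P (map A e) \<longleftrightarrow> e = e\<^sub>0"
  shows "e\<^sub>0 \<in> E'"
proof (rule ccontr)
  assume "e\<^sub>0 \<notin> E'"
  have "E' \<subseteq> E" using sparsifier by (simp add: is_sparsifier_def)
  have "Val E w P A = (\<Sum>e\<in>E. if e = e\<^sub>0 then w e else 0)"
    unfolding Val_def by (rule sum.cong) (simp_all add: isolated)
  also have "\<dots> = w e\<^sub>0" using \<open>finite E\<close> \<open>e\<^sub>0 \<in> E\<close> by simp
  finally have "Val E w P A = w e\<^sub>0" .
  moreover have "Val E' w' P A = 0"
    unfolding Val_def using \<open>E' \<subseteq> E\<close> \<open>e\<^sub>0 \<notin> E'\<close> isolated by (intro sum.neutral) auto
  moreover have "(1 - \<epsilon>) * Val E w P A \<le> Val E' w' P A"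
    using sparsifier \<open>A ` V \<subseteq> D\<close> by (simp add: is_sparsifier_def)
  moreover have "0 < (1 - \<epsilon>) * w e\<^sub>0"
    using \<open>\<epsilon> < 1\<close> \<open>w e\<^sub>0 > 0\<close> by simp
  ultimately show False by simp
qed

text \<open>A singleton l-cube together with a fixed witness xs for the remaining coordinates;
  uniqueness of the corner is only needed for this witness.\<close>

locale singleton_cube =
  fixes D :: "'d set" and P :: "'d list \<Rightarrow> bool" and k l :: nat
    and d :: "nat \<Rightarrow> bool \<Rightarrow> 'd" and nn :: "nat \<Rightarrow> bool" and \<sigma> :: "nat \<Rightarrow> nat"
    and xs :: "'d list"
  assumes d_in_D: "j < l \<Longrightarrow> d j b \<in> D"
    and l_le_k: "l \<le> k"
    and \<sigma>_permutes: "\<sigma> permutes {..<k}"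
    and length_xs: "length xs = k - l"
    and set_xs_subset: "set xs \<subseteq> D"
    and P_corner: "P (permute_tuple \<sigma> (map (\<lambda>j. d j (nn j)) [0..<l] @ xs))"
    and P_corner_unique:
      "P (permute_tuple \<sigma> (map (\<lambda>j. d j (ii j)) [0..<l] @ xs)) \<Longrightarrow> j < l \<Longrightarrow> ii j = nn j"

lemma contains_singleton_cubeE:
  assumes "contains_singleton_cube D k P l" and "l \<le> k"
  obtains d nn \<sigma> xs where "singleton_cube D P k l d nn \<sigma> xs"
proof -
  obtain d :: "nat \<Rightarrow> bool \<Rightarrow> 'a" and nn \<sigma> xs
    where d: "\<forall>j<l. d j False \<in> D \<and> d j True \<in> D \<and> d j False \<noteq> d j True"
      and \<sigma>: "\<sigma> permutes {..<k}"
      and xs: "length xs = k - l" "set xs \<subseteq> D"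
      and corner: "P (permute_tuple \<sigma> (map (\<lambda>j. d j (nn j)) [0..<l] @ xs))"
      and unique: "\<forall>ys (ii :: nat \<Rightarrow> bool). length ys = k - l \<and> set ys \<subseteq> D \<and>
           P (permute_tuple \<sigma> (map (\<lambda>j. d j (ii j)) [0..<l] @ ys)) \<longrightarrow> (\<forall>j<l. ii j = nn j)"
    using assms(1) unfolding contains_singleton_cube_def by blast
  show thesis
  proof (rule that, unfold_locales)
    show "d j b \<in> D" if "j < l" for j b
      using d that by (cases b) auto
    show "ii j = nn j"
      if "P (permute_tuple \<sigma> (map (\<lambda>j. d j (ii j)) [0..<l] @ xs))" and "j < l" for ii j
      using unique xs that by blast
  qed (use assms(2) \<sigma> xs corner in auto)
qed

context singleton_cube
begin

text \<open>Block j gets d j (nn j) at the vertex selected by the index list and d j (\<not> nn j)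
  elsewhere.\<close>

definition isolating_assignment :: "nat \<Rightarrow> nat list \<Rightarrow> nat \<Rightarrow> 'd" where
  "isolating_assignment m as\<^sub>0 v =
     (if v < l * m then d (v mod l) ((v div l = as\<^sub>0 ! (v mod l)) = nn (v mod l))
      else xs ! (v - l * m))"

lemma isolating_assignment_in_D:
  "isolating_assignment m as\<^sub>0 ` {..<l * m + (k - l)} \<subseteq> D"
proof (rule image_subsetI)
  fix v assume v: "v \<in> {..<l * m + (k - l)}"
  show "isolating_assignment m as\<^sub>0 v \<in> D"
  proof (cases "v < l * m")
    case True
    then have "v mod l < l" by (intro mod_less_divisor) (cases l; simp)
    with True show ?thesis by (simp add: isolating_assignment_def d_in_D)
  next
    case False
    with v have "v - l * m < length xs" by (simp add: length_xs)
    with False show ?thesis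
      using set_xs_subset nth_mem by (fastforce simp: isolating_assignment_def)
  qed
qed

lemma map_isolating_assignment_block_tuple:
  assumes "set as \<subseteq> {..<m}" and "length as = l"
  shows "map (isolating_assignment m as\<^sub>0) (block_tuple k l m as) =
    map (\<lambda>j. d j ((as ! j = as\<^sub>0 ! j) = nn j)) [0..<l] @ xs"
proof -
  have "map (isolating_assignment m as\<^sub>0) (map (\<lambda>j. as ! j * l + j) [0..<l]) =
      map (\<lambda>j. d j ((as ! j = as\<^sub>0 ! j) = nn j)) [0..<l]"
  proof -
    have "isolating_assignment m as\<^sub>0 (as ! j * l + j) = d j ((as ! j = as\<^sub>0 ! j) = nn j)"
      if "j < l" for j
      using block_vertex_less[OF assms that] that by (simp add: isolating_assignment_def)
    then show ?thesis by simp
  qed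
  moreover have "map (isolating_assignment m as\<^sub>0) (map (\<lambda>i. l * m + i) [0..<k - l]) = xs"
    by (rule nth_equalityI) (simp_all add: isolating_assignment_def length_xs)
  ultimately show ?thesis by (simp add: block_tuple_def)
qed

lemma map_isolating_assignment_cube_edge:
  assumes "set as \<subseteq> {..<m}" and "length as = l"
  shows "map (isolating_assignment m as\<^sub>0) (permute_tuple \<sigma> (block_tuple k l m as)) =
    permute_tuple \<sigma> (map (\<lambda>j. d j ((as ! j = as\<^sub>0 ! j) = nn j)) [0..<l] @ xs)"
proof -
  have "\<sigma> permutes {..<length (block_tuple k l m as)}"
    by (simp only: length_block_tuple[OF l_le_k] \<sigma>_permutes)
  then show ?thesis
    by (simp add: map_permute_tuple map_isolating_assignment_block_tuple[OF assms])
qed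

lemma P_isolating_assignment_iff:
  assumes as\<^sub>0: "set as\<^sub>0 \<subseteq> {..<m}" "length as\<^sub>0 = l" and "e \<in> cube_edges \<sigma> k l m"
  shows "P (map (isolating_assignment m as\<^sub>0) e) \<longleftrightarrow> e = permute_tuple \<sigma> (block_tuple k l m as\<^sub>0)"
proof
  obtain as where as: "set as \<subseteq> {..<m}" "length as = l"
    and e: "e = permute_tuple \<sigma> (block_tuple k l m as)"
    using assms(3) by (auto simp: cube_edges_def)
  assume "P (map (isolating_assignment m as\<^sub>0) e)"
  then have "as ! j = as\<^sub>0 ! j" if "j < l" for j
    using P_corner_unique[of "\<lambda>j. (as ! j = as\<^sub>0 ! j) = nn j" j] that
    by (auto simp: e map_isolating_assignment_cube_edge[OF as])
  then have "as = as\<^sub>0"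
    using as(2) as\<^sub>0(2) by (simp add: nth_equalityI)
  then show "e = permute_tuple \<sigma> (block_tuple k l m as\<^sub>0)" using e by simp
next
  assume "e = permute_tuple \<sigma> (block_tuple k l m as\<^sub>0)"
  then show "P (map (isolating_assignment m as\<^sub>0) e)"
    using P_corner by (simp add: map_isolating_assignment_cube_edge[OF as\<^sub>0])
qed

lemma sparsifier_of_cube_edges_eq:
  assumes sparsifier:
      "is_sparsifier D P \<epsilon> {..<l * m + (k - l)} (cube_edges \<sigma> k l m) (\<lambda>_. 1) E' w'"
    and "\<epsilon> < 1"
  shows "E' = cube_edges \<sigma> k l m"
proof
  show "E' \<subseteq> cube_edges \<sigma> k l m" using sparsifier by (simp add: is_sparsifier_def)
  have "finite (cube_edges \<sigma> k l m)"
    by (simp add: cube_edges_def finite_lists_length_eq)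
  show "cube_edges \<sigma> k l m \<subseteq> E'"
  proof
    fix e\<^sub>0 assume "e\<^sub>0 \<in> cube_edges \<sigma> k l m"
    then obtain as\<^sub>0 where as\<^sub>0: "set as\<^sub>0 \<subseteq> {..<m}" "length as\<^sub>0 = l"
      and e\<^sub>0: "e\<^sub>0 = permute_tuple \<sigma> (block_tuple k l m as\<^sub>0)"
      by (auto simp: cube_edges_def)
    show "e\<^sub>0 \<in> E'"
    proof (rule sparsifier_keeps_isolated_edge[OF sparsifier \<open>\<epsilon> < 1\<close> \<open>finite _\<close> \<open>e\<^sub>0 \<in> _\<close> _
          isolating_assignment_in_D[of m as\<^sub>0]])
      fix e assume "e \<in> cube_edges \<sigma> k l m"
      then show "P (map (isolating_assignment m as\<^sub>0) e) \<longleftrightarrow> e = e\<^sub>0"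
        using P_isolating_assignment_iff[OF as\<^sub>0] e\<^sub>0 by simp
    qed simp
  qed
qed

lemma cube_hypergraph_has_only_dense_sparsifiers:
  assumes "1 \<le> m"
  shows "\<exists>(V :: nat set) E w. wdhypergraph k V E w \<and> card V = l * m + (k - l) \<and>
    (\<forall>\<epsilon>. 0 < \<epsilon> \<and> \<epsilon> < 1 \<longrightarrow> (\<forall>E' w'. is_sparsifier D P \<epsilon> V E w E' w' \<longrightarrow>
       real (card E') \<ge> 1 / real k ^ l * real (l * m + (k - l)) ^ l))"
proof (intro exI conjI allI impI)
  show "wdhypergraph k {..<l * m + (k - l)} (cube_edges \<sigma> k l m) (\<lambda>_. 1)"
    by (rule wdhypergraph_cube_edges[OF \<sigma>_permutes l_le_k])
  show "card {..<l * m + (k - l)} = l * m + (k - l)" by simp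
  fix \<epsilon> E' w'
  assume "0 < \<epsilon> \<and> \<epsilon> < 1"
    and "is_sparsifier D P \<epsilon> {..<l * m + (k - l)} (cube_edges \<sigma> k l m) (\<lambda>_. 1) E' w'"
  then have "E' = cube_edges \<sigma> k l m"
    by (simp add: sparsifier_of_cube_edges_eq)
  then have "card E' = m ^ l"
    by (simp add: card_cube_edges[OF \<sigma>_permutes l_le_k])
  then show "real (card E') \<ge> 1 / real k ^ l * real (l * m + (k - l)) ^ l"
    using cube_vertex_count_bound[OF l_le_k assms] by simp
qed

end

theorem proposition15:
  fixes D :: "'d set" and P :: "'d list \<Rightarrow> bool" and k l :: nat
  assumes "finite D" and "k \<ge> 2" and "2 \<le> l" and "l \<le> k"
    and "contains_singleton_cube D k P l"
  shows "\<exists>c>0. infinite {n :: nat. \<exists>(V :: nat set) E w.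
           wdhypergraph k V E w \<and> card V = n \<and>
           (\<forall>\<epsilon>. 0 < \<epsilon> \<and> \<epsilon> < 1 \<longrightarrow>
              (\<forall>E' w'. is_sparsifier D P \<epsilon> V E w E' w' \<longrightarrow> real (card E') \<ge> c * real n ^ l))}"
proof -
  obtain d nn \<sigma> xs where "singleton_cube D P k l d nn \<sigma> xs"
    using assms(5,4) by (rule contains_singleton_cubeE)
  then interpret singleton_cube D P k l d nn \<sigma> xs .
  show ?thesis
  proof (rule exI[of _ "1 / real k ^ l"], intro conjI infinite_if_contains_progression[of l "k - l"])
    show "0 < 1 / real k ^ l" using assms(2) by simp
    show "0 < l" using assms(3) by simp
  qed (blast intro: cube_hypergraph_has_only_dense_sparsifiers)
qed

end
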